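(* Let $n\ge3$ and suppose $T=T_\lambda(r,m)$ acts linearly and inner faithfully on $\Bbbk\overline{Q}$ so that $g$ acts by a reflection: $g\cdot e_i=e_{n-(d+i)}$, $g\cdot a_i=\mu_ia^*_{n-(d+i+1)}$, $g\cdot a_i^*=\mu_i^*a_{n-(d+i+1)}$ for some integer $0\le d\le n-1$ and $\mu_i,\mu_i^*\in\Bbbk^\times$, and that this action descends to an action on $\Pi_Q$. Let $\sigma$ be the quiver-Taft map. (I) If $j$ is a vertex with $g\cdot j=j$ and $c_j,c_j^*\in\Bbbk$ satisfy $\sigma(a_j)=c_ja^*_{j-1}$, $\sigma(a_j^* )=c_j^*a_j^*$, then $c_j^*=-\mu_j^{-1}c_j$; and if $c_j\neq0$ then $\mu_i\mu_i^*=1$ for all $i$. (II) If $k$ is a vertex with $g\cdot k=k+1$ and $g\cdot(k+1)=k$, and $c_k,c_k^*\in\Bbbk$ satisfy $\sigma(a_k)=c_ke_k$, $\sigma(a_k^* )=c_k^*e_{k+1}$, and if for all $i$ the identity $a_i^*\sigma(a_i)+\sigma(a_i^* )(g\cdot a_i)-a_{i+1}\sigma(a_{i+1}^* )-\sigma(a_{i+1})(g\cdot a_{i+1}^* )=0$ holds in $\Pi_Q$, then $c_k=-\mu_kc_k^*$; and if $c_k\neq0$ then $\lambda=-1$ and $\mu_i\mu_i^*=1$ for all $i$.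
   Context: Let $\Bbbk$ be a field, $r>1$ and $m$ positive integers with $r\mid m$, and $\lambda\in\Bbbk$ a primitive $r$-th root of unity, with $r$ coprime to the characteristic of $\Bbbk$. The generalized Taft algebra $T=T_\lambda(r,m)$ is the Hopf algebra generated by $g,x$ with relations $gx=\lambda xg$, $g^m=1$, $x^r=0$, $\Delta(g)=g\otimes g$, $\Delta(x)=1\otimes x+x\otimes g$, $\varepsilon(g)=1,\varepsilon(x)=0$, $S(g)=g^{-1}$, $S(x)=-xg^{-1}$. An action of $T$ on an algebra $A$ is a $T$-module algebra structure; so $g$ acts by an algebra automorphism and $x\cdot(ab)=a(x\cdot b)+(x\cdot a)(g\cdot b)$. It is inner faithful if no nonzero Hopf ideal $I$ of $T$ satisfies $I\cdot A=0$. Vertex indices are taken modulo $n$. $\overline{Q}$ has vertices $0,\dots,n-1$ and arrows $a_i:i\to i+1$, $a_i^*:i+1\to i$; in $\Bbbk\overline{Q}$, $e_i$ is the trivial path at $i$, $s(a),t(a)$ source and target, and $pq$ is concatenation ($p$ then $q$) if $t(p)=s(q)$, else $0$. $\Pi_Q=\Bbbk\overline{Q}/(\Omega)$, $(\Omega)$ the ideal generated by $a_i^*a_i-a_{i+1}a_{i+1}^*$; the action descends to $\Pi_Q$ if $(\Omega)$ is stable under $g$ and $x$. A linear action: $g$ acts by a path-length-preserving automorphism ($g\cdot e_i=e_{g\cdot i}$) and $x$ maps vertices into the span of vertices and arrows into the span of vertices and arrows. Then there are scalars $\gamma_i$ with $x\cdot e_i=\gamma_ie_i-\gamma_i\lambda^{-1}e_{g\cdot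 i}$; the quiver-Taft map $\sigma$ is the linear map on the span of vertices and arrows with $\sigma(e_i)=0$ and $\sigma(a)=x\cdot a-\gamma_{t(a)}a+\gamma_{s(a)}\lambda^{-1}(g\cdot a)$ for arrows $a$. *)

theory Defs
  imports Main
begin

inductive_set lspan :: "('a \<Rightarrow> 'k::field) set \<Rightarrow> ('a \<Rightarrow> 'k) set" for S where
  zero: "(\<lambda>_. 0) \<in> lspan S"
| step: "v \<in> S \<Longrightarrow> w \<in> lspan S \<Longrightarrow> (\<lambda>x. c * v x + w x) \<in> lspan S"

definition primroot :: "'k::field \<Rightarrow> nat \<Rightarrow> bool" where
  "primroot lam r \<longleftrightarrow> lam ^ r = 1 \<and> (\<forall>s. 0 < s \<and> s < r \<longrightarrow> lam ^ s \<noteq> 1)"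

text \<open>An element of T is given by its coefficients w.r.t. the PBW basis g^i x^j,
  0 <= i < m, 0 <= j < r; the pair (i,j) stands for g^i x^j.\<close>

type_synonym 'k tel = "nat \<times> nat \<Rightarrow> 'k"
type_synonym 'k ttel = "(nat \<times> nat) \<times> (nat \<times> nat) \<Rightarrow> 'k"

definition TB :: "nat \<Rightarrow> nat \<Rightarrow> (nat \<times> nat) set" where
  "TB r m = {..<m} \<times> {..<r}"

definition Tcar :: "nat \<Rightarrow> nat \<Rightarrow> 'k::field tel set" where
  "Tcar r m = {h. \<forall>p. p \<notin> TB r m \<longrightarrow> h p = 0}"

definition tb :: "nat \<times> nat \<Rightarrow> 'k::field tel" where
  "tb p = (\<lambda>c. if c = p then 1 else 0)"

text \<open>Structure constants: g^i x^j * g^k x^l = lam^(-jk) g^(i+k) x^(j+l)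
  (from gx = lam xg, g^m = 1, x^r = 0).\<close>
definition bprod :: "'k::field \<Rightarrow> nat \<Rightarrow> nat \<Rightarrow> nat \<times> nat \<Rightarrow> nat \<times> nat \<Rightarrow> nat \<times> nat \<Rightarrow> 'k" where
  "bprod lam r m p q c =
     (if (fst p + fst q) mod m = fst c \<and> snd p + snd q = snd c \<and> snd c < r
      then (inverse lam) ^ (snd p * fst q) else 0)"

definition tmul :: "'k::field \<Rightarrow> nat \<Rightarrow> nat \<Rightarrow> 'k tel \<Rightarrow> 'k tel \<Rightarrow> 'k tel" where
  "tmul lam r m h h' = (\<lambda>c. \<Sum>p\<in>TB r m. \<Sum>q\<in>TB r m. h p * h' q * bprod lam r m p q c)"

primrec tpow :: "'k::field \<Rightarrow> nat \<Rightarrow> nat \<Rightarrow> 'k tel \<Rightarrow> nat \<Rightarrow> 'k tel" where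
  "tpow lam r m h 0 = tb (0, 0)"
| "tpow lam r m h (Suc k) = tmul lam r m (tpow lam r m h k) h"

definition ttens :: "'k::field tel \<Rightarrow> 'k tel \<Rightarrow> 'k ttel" where
  "ttens h h' = (\<lambda>c. h (fst c) * h' (snd c))"

definition ttmul :: "'k::field \<Rightarrow> nat \<Rightarrow> nat \<Rightarrow> 'k ttel \<Rightarrow> 'k ttel \<Rightarrow> 'k ttel" where
  "ttmul lam r m P Q = (\<lambda>c. \<Sum>p1\<in>TB r m. \<Sum>p2\<in>TB r m. \<Sum>q1\<in>TB r m. \<Sum>q2\<in>TB r m.
      P (p1, p2) * Q (q1, q2) * bprod lam r m p1 q1 (fst c) * bprod lam r m p2 q2 (snd c))"

primrec ttpow :: "'k::field \<Rightarrow> nat \<Rightarrow> nat \<Rightarrow> 'k ttel \<Rightarrow> nat \<Rightarrow> 'k ttel" where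
  "ttpow lam r m P 0 = ttens (tb (0, 0)) (tb (0, 0))"
| "ttpow lam r m P (Suc k) = ttmul lam r m (ttpow lam r m P k) P"

definition Delta_g :: "'k::field ttel" where
  "Delta_g = ttens (tb (1, 0)) (tb (1, 0))"

definition Delta_x :: "'k::field ttel" where
  "Delta_x = (\<lambda>c. ttens (tb (0, 0)) (tb (0, 1)) c + ttens (tb (0, 1)) (tb (1, 0)) c)"

definition tcoprod :: "'k::field \<Rightarrow> nat \<Rightarrow> nat \<Rightarrow> 'k tel \<Rightarrow> 'k ttel" where
  "tcoprod lam r m h = (\<lambda>c. \<Sum>p\<in>TB r m.
      h p * ttmul lam r m (ttpow lam r m Delta_g (fst p)) (ttpow lam r m Delta_x (snd p)) c)"

definition teps :: "nat \<Rightarrow> 'k::field tel \<Rightarrow> 'k" where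
  "teps m h = (\<Sum>i<m. h (i, 0))"

text \<open>Antipode: S(g) = g^(-1) = g^(m-1), S(x) = - x g^(-1); S is an anti-homomorphism,
  so S(g^i x^j) = S(x)^j S(g)^i.\<close>
definition tanti :: "'k::field \<Rightarrow> nat \<Rightarrow> nat \<Rightarrow> 'k tel \<Rightarrow> 'k tel" where
  "tanti lam r m h = (\<lambda>c. \<Sum>p\<in>TB r m.
      h p * tmul lam r m
        (tpow lam r m (\<lambda>c'. - tmul lam r m (tb (0, 1)) (tb (m - 1, 0)) c') (snd p))
        (tpow lam r m (tb (m - 1, 0)) (fst p)) c)"

definition hopf_ideal :: "'k::field \<Rightarrow> nat \<Rightarrow> nat \<Rightarrow> 'k tel set \<Rightarrow> bool" where
  "hopf_ideal lam r m I \<longleftrightarrow>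
     I \<subseteq> Tcar r m \<and> (\<lambda>_. 0) \<in> I \<and>
     (\<forall>h\<in>I. \<forall>h'\<in>I. (\<lambda>c. h c + h' c) \<in> I) \<and>
     (\<forall>h\<in>I. \<forall>a. (\<lambda>c. a * h c) \<in> I) \<and>
     (\<forall>h\<in>I. \<forall>t\<in>Tcar r m. tmul lam r m t h \<in> I \<and> tmul lam r m h t \<in> I) \<and>
     (\<forall>h\<in>I. teps m h = 0) \<and>
     (\<forall>h\<in>I. tanti lam r m h \<in> I) \<and>
     (\<forall>h\<in>I. tcoprod lam r m h \<in>
        lspan ({ttens u t | u t. u \<in> I \<and> t \<in> Tcar r m} \<union> {ttens t u | u t. u \<in> I \<and> t \<in> Tcar r m}))"

datatype arr = Ar nat | As nat   \<comment> \<open>Ar i = a_i : i -> i+1,  As i = a_i^* : i+1 -> i\<close>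

fun aidx :: "arr \<Rightarrow> nat" where "aidx (Ar i) = i" | "aidx (As i) = i"
fun asrc :: "nat \<Rightarrow> arr \<Rightarrow> nat" where "asrc n (Ar i) = i" | "asrc n (As i) = (i + 1) mod n"
fun atgt :: "nat \<Rightarrow> arr \<Rightarrow> nat" where "atgt n (Ar i) = (i + 1) mod n" | "atgt n (As i) = i"

type_synonym qpath = "nat \<times> arr list"  \<comment> \<open>(source vertex, arrows in order)\<close>

fun pend :: "nat \<Rightarrow> nat \<Rightarrow> arr list \<Rightarrow> nat" where
  "pend n v [] = v"
| "pend n v (a # as) = pend n (atgt n a) as"

fun pvalid :: "nat \<Rightarrow> nat \<Rightarrow> arr list \<Rightarrow> bool" where
  "pvalid n v [] = (v < n)"
| "pvalid n v (a # as) = (v < n \<and> aidx a < n \<and> asrc n a = v \<and> pvalid n (atgt n a) as)"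

definition PA :: "nat \<Rightarrow> (qpath \<Rightarrow> 'k::field) set" where
  "PA n = {f. finite {p. f p \<noteq> 0} \<and> (\<forall>p. f p \<noteq> 0 \<longrightarrow> pvalid n (fst p) (snd p))}"

definition pzero :: "qpath \<Rightarrow> 'k::field" where "pzero = (\<lambda>_. 0)"
definition padd :: "(qpath \<Rightarrow> 'k::field) \<Rightarrow> (qpath \<Rightarrow> 'k) \<Rightarrow> (qpath \<Rightarrow> 'k)" where
  "padd f h = (\<lambda>p. f p + h p)"
definition psub :: "(qpath \<Rightarrow> 'k::field) \<Rightarrow> (qpath \<Rightarrow> 'k) \<Rightarrow> (qpath \<Rightarrow> 'k)" where
  "psub f h = (\<lambda>p. f p - h p)"
definition psmult :: "'k::field \<Rightarrow> (qpath \<Rightarrow> 'k) \<Rightarrow> (qpath \<Rightarrow> 'k)" where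
  "psmult c f = (\<lambda>p. c * f p)"

text \<open>Product: concatenation, p then q, zero if t(p) <> s(q).\<close>
definition pmul :: "nat \<Rightarrow> (qpath \<Rightarrow> 'k::field) \<Rightarrow> (qpath \<Rightarrow> 'k) \<Rightarrow> (qpath \<Rightarrow> 'k)" where
  "pmul n f h = (\<lambda>p. \<Sum>q\<in>{q. f q \<noteq> 0}. \<Sum>q'\<in>{q'. h q' \<noteq> 0}.
      if pend n (fst q) (snd q) = fst q' \<and> (fst q, snd q @ snd q') = p then f q * h q' else 0)"

definition pone :: "nat \<Rightarrow> qpath \<Rightarrow> 'k::field" where
  "pone n = (\<lambda>p. if snd p = [] \<and> fst p < n then 1 else 0)"

text \<open>Vertex idempotent e_i and arrows a_i, a_i^*, indices taken mod n.\<close>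
definition vtx :: "nat \<Rightarrow> nat \<Rightarrow> qpath \<Rightarrow> 'k::field" where
  "vtx n i = (\<lambda>p. if p = (i mod n, []) then 1 else 0)"

definition arrel :: "nat \<Rightarrow> arr \<Rightarrow> qpath \<Rightarrow> 'k::field" where
  "arrel n a = (\<lambda>p. if p = (asrc n a, [a]) then 1 else 0)"

definition arrA :: "nat \<Rightarrow> nat \<Rightarrow> qpath \<Rightarrow> 'k::field" where
  "arrA n i = arrel n (Ar (i mod n))"

definition arrS :: "nat \<Rightarrow> nat \<Rightarrow> qpath \<Rightarrow> 'k::field" where
  "arrS n i = arrel n (As (i mod n))"

definition rho :: "nat \<Rightarrow> nat \<Rightarrow> qpath \<Rightarrow> 'k::field" where
  "rho n i = psub (pmul n (arrS n i) (arrA n i)) (pmul n (arrA n (i + 1)) (arrS n (i + 1)))"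

definition Omega :: "nat \<Rightarrow> (qpath \<Rightarrow> 'k::field) set" where
  "Omega n = lspan {pmul n (pmul n u (rho n i)) v | u v i. u \<in> PA n \<and> v \<in> PA n \<and> i < n}"

text \<open>T-module algebra structure on the path algebra, with g acting by G and x by X.\<close>
definition taft_module_algebra ::
  "nat \<Rightarrow> 'k::field \<Rightarrow> nat \<Rightarrow> nat \<Rightarrow> ((qpath \<Rightarrow> 'k) \<Rightarrow> (qpath \<Rightarrow> 'k)) \<Rightarrow> ((qpath \<Rightarrow> 'k) \<Rightarrow> (qpath \<Rightarrow> 'k)) \<Rightarrow> bool" where
  "taft_module_algebra n lam r m G X \<longleftrightarrow>
     bij_betw G (PA n) (PA n) \<and> (\<forall>w\<in>PA n. X w \<in> PA n) \<and>
     (\<forall>c. \<forall>w\<in>PA n. \<forall>w'\<in>PA n. G (padd (psmult c w) w') = padd (psmult c (G w)) (G w')) \<and>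
     (\<forall>c. \<forall>w\<in>PA n. \<forall>w'\<in>PA n. X (padd (psmult c w) w') = padd (psmult c (X w)) (X w')) \<and>
     (\<forall>w\<in>PA n. \<forall>w'\<in>PA n. G (pmul n w w') = pmul n (G w) (G w')) \<and>
     (\<forall>w\<in>PA n. \<forall>w'\<in>PA n. X (pmul n w w') = padd (pmul n w (X w')) (pmul n (X w) (G w'))) \<and>
     G (pone n) = pone n \<and> X (pone n) = pzero \<and>
     (\<forall>w\<in>PA n. G (X w) = psmult lam (X (G w))) \<and>
     (\<forall>w\<in>PA n. (G ^^ m) w = w) \<and>
     (\<forall>w\<in>PA n. (X ^^ r) w = pzero)"

definition tact :: "nat \<Rightarrow> nat \<Rightarrow> ((qpath \<Rightarrow> 'k) \<Rightarrow> (qpath \<Rightarrow> 'k)) \<Rightarrow> ((qpath \<Rightarrow> 'k) \<Rightarrow> (qpath \<Rightarrow> 'k))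
    \<Rightarrow> 'k::field tel \<Rightarrow> (qpath \<Rightarrow> 'k) \<Rightarrow> (qpath \<Rightarrow> 'k)" where
  "tact r m G X h w = (\<lambda>q. \<Sum>p\<in>TB r m. h p * (G ^^ fst p) ((X ^^ snd p) w) q)"

definition inner_faithful ::
  "nat \<Rightarrow> 'k::field \<Rightarrow> nat \<Rightarrow> nat \<Rightarrow> ((qpath \<Rightarrow> 'k) \<Rightarrow> (qpath \<Rightarrow> 'k)) \<Rightarrow> ((qpath \<Rightarrow> 'k) \<Rightarrow> (qpath \<Rightarrow> 'k)) \<Rightarrow> bool" where
  "inner_faithful n lam r m G X \<longleftrightarrow>
     (\<forall>I. hopf_ideal lam r m I \<and> (\<forall>h\<in>I. \<forall>w\<in>PA n. tact r m G X h w = pzero)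
          \<longrightarrow> (\<forall>h\<in>I. h = (\<lambda>_. 0)))"

definition plen_hom :: "nat \<Rightarrow> (qpath \<Rightarrow> 'k::field) \<Rightarrow> bool" where
  "plen_hom l w \<longleftrightarrow> (\<forall>p. w p \<noteq> 0 \<longrightarrow> length (snd p) = l)"

definition linear_action ::
  "nat \<Rightarrow> ((qpath \<Rightarrow> 'k::field) \<Rightarrow> (qpath \<Rightarrow> 'k)) \<Rightarrow> ((qpath \<Rightarrow> 'k) \<Rightarrow> (qpath \<Rightarrow> 'k)) \<Rightarrow> bool" where
  "linear_action n G X \<longleftrightarrow>
     (\<forall>l. \<forall>w\<in>PA n. plen_hom l w \<longrightarrow> plen_hom l (G w)) \<and>
     (\<forall>i<n. \<forall>p. X (vtx n i) p \<noteq> 0 \<longrightarrow> length (snd p) = 0) \<and>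
     (\<forall>i<n. \<forall>p. X (arrA n i) p \<noteq> 0 \<longrightarrow> length (snd p) \<le> 1) \<and>
     (\<forall>i<n. \<forall>p. X (arrS n i) p \<noteq> 0 \<longrightarrow> length (snd p) \<le> 1)"

definition descends :: "nat \<Rightarrow> ((qpath \<Rightarrow> 'k::field) \<Rightarrow> (qpath \<Rightarrow> 'k)) \<Rightarrow> ((qpath \<Rightarrow> 'k) \<Rightarrow> (qpath \<Rightarrow> 'k)) \<Rightarrow> bool" where
  "descends n G X \<longleftrightarrow> (\<forall>w\<in>Omega n. G w \<in> Omega n \<and> X w \<in> Omega n)"

definition qtaft :: "nat \<Rightarrow> 'k::field \<Rightarrow> ((qpath \<Rightarrow> 'k) \<Rightarrow> (qpath \<Rightarrow> 'k)) \<Rightarrow> ((qpath \<Rightarrow> 'k) \<Rightarrow> (qpath \<Rightarrow> 'k))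
    \<Rightarrow> (nat \<Rightarrow> 'k) \<Rightarrow> arr \<Rightarrow> (qpath \<Rightarrow> 'k)" where
  "qtaft n lam G X gam a = (\<lambda>p. X (arrel n a) p - gam (atgt n a) * arrel n a p
        + gam (asrc n a) * inverse lam * G (arrel n a) p)"

text \<open>Reflection on vertices: i |-> n - (d + i) mod n (written with 2n to avoid nat truncation).\<close>
definition gref :: "nat \<Rightarrow> nat \<Rightarrow> nat \<Rightarrow> nat" where
  "gref n d i = (2 * n - (d + i)) mod n"

end

theory Submission
  imports Defs
begin

(* Elements of the relation ideal (Omega) are combinations of u rho_i v, so on paths of length at
   most two they are controlled by the rho_i alone: they vanish on paths of length 0 and 1 and on
   a*a*, and at every vertex the coefficients of the two loops a*_{q-1} a_{q-1} and a_q a*_q cancel.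
   As g and x preserve (Omega), these functionals vanish on g.rho_i and x.rho_i.  The loops in
   g.rho_i show that mu_i mu*_i does not depend on i.  In case (I) the coefficient of a*_j a*_{j-1}
   in x.rho_j, and in case (II) the coefficient of a*_k in the sigma-relation at k, give the
   relation between c and c*.  If c is nonzero, a coefficient of gx = lambda xg on an arrow and a
   second coefficient relation (the loops of x.rho_{j-1}, resp. the sigma-relation at k-1) force
   mu mu* = 1, and in case (II) also lambda = -1. *)

section \<open>The path algebra of the double cyclic quiver\<close>

lemma pvalid_imp_lt: "pvalid n v l \<Longrightarrow> v < n"
  by (cases l) auto

lemma pvalid_append: "pvalid n v (xs @ ys) \<longleftrightarrow> pvalid n v xs \<and> pvalid n (pend n v xs) ys"
  by (induction xs arbitrary: v) (auto dest: pvalid_imp_lt)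

lemma pend_lt: "pvalid n v l \<Longrightarrow> pend n v l < n"
  by (induction l arbitrary: v) auto

lemma padd_apply: "padd f h p = f p + h p"
  by (simp add: padd_def)

lemma psub_apply: "psub f h p = f p - h p"
  by (simp add: psub_def)

lemma psmult_apply: "psmult c f p = c * f p"
  by (simp add: psmult_def)

lemma vtx_apply: "vtx n i (s, l) = (if s = i mod n \<and> l = [] then 1 else 0)"
  by (auto simp: vtx_def)

lemma arrA_apply: "arrA n i p = (if p = (i mod n, [Ar (i mod n)]) then 1 else 0)"
  by (simp add: arrA_def arrel_def)

lemma arrS_apply: "arrS n i p = (if p = ((i mod n + 1) mod n, [As (i mod n)]) then 1 else 0)"
  by (simp add: arrS_def arrel_def)

lemma arrA_mod [simp]: "arrA n (i mod n) = arrA n i"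
  by (simp add: arrA_def)

lemma arrS_mod [simp]: "arrS n (i mod n) = arrS n i"
  by (simp add: arrS_def)

lemma PA_finite_support: "f \<in> PA n \<Longrightarrow> finite {q. f q \<noteq> 0}"
  by (simp add: PA_def)

lemma pmul_apply:
  assumes "finite {q. f q \<noteq> 0}" and "finite {q. h q \<noteq> 0}"
  shows "pmul n f h (s, l) = (\<Sum>k\<le>length l. f (s, take k l) * h (pend n s (take k l), drop k l))"
proof -
  define A where "A = {q. f q \<noteq> 0} \<times> {q. h q \<noteq> 0}"
  define C where "C = (\<lambda>x::qpath \<times> qpath. pend n (fst (fst x)) (snd (fst x)) = fst (snd x)
    \<and> (fst (fst x), snd (fst x) @ snd (snd x)) = (s, l))"
  define F where "F = (\<lambda>x::qpath \<times> qpath. f (fst x) * h (snd x))"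
  define \<phi> where "\<phi> = (\<lambda>k. ((s, take k l), (pend n s (take k l), drop k l)))"
  have "pmul n f h (s, l) = (\<Sum>x\<in>A. if C x then F x else 0)"
    unfolding pmul_def A_def C_def F_def sum.cartesian_product by (simp add: case_prod_beta)
  also have "\<dots> = (\<Sum>x\<in>{x\<in>A. C x}. F x)"
    by (simp add: sum.inter_filter A_def assms)
  also have "\<dots> = (\<Sum>x\<in>\<phi> ` {..length l}. F x)"
  proof (rule sum.mono_neutral_left)
    show "{x\<in>A. C x} \<subseteq> \<phi> ` {..length l}"
    proof
      fix x assume "x \<in> {x\<in>A. C x}"
      then have "x = \<phi> (length (snd (fst x)))" and "length (snd (fst x)) \<le> length l"
        by (auto simp: C_def \<phi>_def prod_eq_iff)
      then show "x \<in> \<phi> ` {..length l}" by blast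
    qed
    show "\<forall>x\<in>\<phi> ` {..length l} - {x\<in>A. C x}. F x = 0"
      by (auto simp: A_def C_def F_def \<phi>_def)
  qed simp
  also have "\<dots> = (\<Sum>k\<le>length l. F (\<phi> k))"
    by (rule sum.reindex[unfolded comp_def]) (auto intro!: inj_onI simp: \<phi>_def dest: arg_cong[of _ _ length])
  finally show ?thesis
    by (simp add: F_def \<phi>_def)
qed

lemma pmul_apply_Nil:
  "f \<in> PA n \<Longrightarrow> h \<in> PA n \<Longrightarrow> pmul n f h (s, []) = f (s, []) * h (s, [])"
  by (simp add: pmul_apply PA_finite_support)

lemma pmul_apply_single:
  "f \<in> PA n \<Longrightarrow> h \<in> PA n \<Longrightarrow>
    pmul n f h (s, [a]) = f (s, []) * h (s, [a]) + f (s, [a]) * h (atgt n a, [])"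
  by (simp add: pmul_apply PA_finite_support)

lemma pmul_apply_two:
  "f \<in> PA n \<Longrightarrow> h \<in> PA n \<Longrightarrow>
    pmul n f h (s, [a, b]) =
      f (s, []) * h (s, [a, b]) + f (s, [a]) * h (atgt n a, [b]) + f (s, [a, b]) * h (atgt n b, [])"
  by (simp add: pmul_apply PA_finite_support numeral_2_eq_2)

lemma pmul_apply_nonzero_split:
  assumes "f \<in> PA n" "h \<in> PA n" "pmul n f h (s, l) \<noteq> 0"
  obtains k where "f (s, take k l) \<noteq> 0" "h (pend n s (take k l), drop k l) \<noteq> 0"
proof -
  have "(\<Sum>k\<le>length l. f (s, take k l) * h (pend n s (take k l), drop k l)) \<noteq> 0"
    using assms by (simp add: pmul_apply PA_finite_support)
  then show thesis
    using that by (metis (no_types, lifting) mult_eq_0_iff sum.neutral)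
qed

lemma PA_pmul:
  assumes f: "f \<in> PA n" and h: "h \<in> PA n"
  shows "pmul n f h \<in> PA n"
proof -
  let ?concat = "\<lambda>(q, q'). (fst q, snd q @ snd q')"
  have "{p. pmul n f h p \<noteq> 0} \<subseteq> ?concat ` ({q. f q \<noteq> 0} \<times> {q. h q \<noteq> 0})"
  proof
    fix p assume "p \<in> {p. pmul n f h p \<noteq> 0}"
    moreover obtain s l where p: "p = (s, l)" by fastforce
    ultimately obtain k where "f (s, take k l) \<noteq> 0" "h (pend n s (take k l), drop k l) \<noteq> 0"
      using pmul_apply_nonzero_split[OF f h] by auto
    then show "p \<in> ?concat ` ({q. f q \<noteq> 0} \<times> {q. h q \<noteq> 0})"
      using p by (intro image_eqI[where x="((s, take k l), (pend n s (take k l), drop k l))"]) auto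
  qed
  then have "finite {p. pmul n f h p \<noteq> 0}"
    by (rule finite_subset) (use f h in \<open>simp add: PA_finite_support\<close>)
  moreover have "pvalid n s l" if nz: "pmul n f h (s, l) \<noteq> 0" for s l
  proof -
    obtain k where "f (s, take k l) \<noteq> 0" "h (pend n s (take k l), drop k l) \<noteq> 0"
      using pmul_apply_nonzero_split[OF f h nz] .
    then have "pvalid n s (take k l)" "pvalid n (pend n s (take k l)) (drop k l)"
      using f h by (auto simp: PA_def)
    then show ?thesis
      using pvalid_append[of n s "take k l" "drop k l"] by simp
  qed
  ultimately show ?thesis
    unfolding PA_def by auto
qed

lemma PA_pointwise:
  assumes "f \<in> PA n" "g \<in> PA n" "F 0 0 = 0"
  shows "(\<lambda>p. F (f p) (g p)) \<in> PA n"
proof -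
  have "{p. F (f p) (g p) \<noteq> 0} \<subseteq> {p. f p \<noteq> 0} \<union> {p. g p \<noteq> 0}"
    using assms(3) by auto
  then show ?thesis
    using assms unfolding PA_def by (auto intro: finite_subset)
qed

lemma PA_padd: "f \<in> PA n \<Longrightarrow> g \<in> PA n \<Longrightarrow> padd f g \<in> PA n"
  unfolding padd_def by (rule PA_pointwise) auto

lemma PA_psub: "f \<in> PA n \<Longrightarrow> g \<in> PA n \<Longrightarrow> psub f g \<in> PA n"
  unfolding psub_def by (rule PA_pointwise) auto

lemma PA_psmult: "f \<in> PA n \<Longrightarrow> psmult c f \<in> PA n"
  unfolding psmult_def using PA_pointwise[of f n f "\<lambda>x _. c * x"] by simp

lemma PA_pzero: "pzero \<in> PA n"
  by (simp add: PA_def pzero_def)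

lemma PA_pone: "(pone n :: qpath \<Rightarrow> 'k::field) \<in> PA n"
proof -
  have "{p. pone n p \<noteq> (0::'k::field)} = (\<lambda>s. (s, [])) ` {..<n}"
    by (auto simp: pone_def)
  then have "finite {p. pone n p \<noteq> (0::'k)}"
    by simp
  then show ?thesis
    unfolding PA_def by (auto simp: pone_def)
qed

lemma PA_indicator_path: "pvalid n s l \<Longrightarrow> (\<lambda>p. if p = (s, l) then 1 else 0) \<in> PA n"
  unfolding PA_def by auto

lemma PA_vtx: "0 < n \<Longrightarrow> vtx n i \<in> PA n"
  unfolding vtx_def by (rule PA_indicator_path) simp

lemma PA_arrel: "0 < n \<Longrightarrow> aidx a < n \<Longrightarrow> arrel n a \<in> PA n"
  unfolding arrel_def by (rule PA_indicator_path) (cases a; simp)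

lemma PA_arrA: "0 < n \<Longrightarrow> arrA n i \<in> PA n"
  unfolding arrA_def by (rule PA_arrel) auto

lemma PA_arrS: "0 < n \<Longrightarrow> arrS n i \<in> PA n"
  unfolding arrS_def by (rule PA_arrel) auto

lemma PA_rho: "0 < n \<Longrightarrow> rho n i \<in> PA n"
  unfolding rho_def by (intro PA_psub PA_pmul PA_arrA PA_arrS)

lemma pmul_pone_left:
  assumes "f \<in> PA n"
  shows "pmul n (pone n) f = f"
proof
  fix p :: qpath
  obtain s l where p: "p = (s, l)" by fastforce
  have "pmul n (pone n) f (s, l) = (\<Sum>k\<le>length l. pone n (s, take k l) * f (pend n s (take k l), drop k l))"
    using PA_pone assms by (intro pmul_apply PA_finite_support)
  also have "\<dots> = (\<Sum>k\<le>length l. if k = 0 then (if s < n then 1 else 0) * f (s, l) else 0)"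
    by (intro sum.cong) (auto simp: pone_def)
  also have "\<dots> = f (s, l)"
    using assms by (auto simp: PA_def dest: pvalid_imp_lt)
  finally show "pmul n (pone n) f p = f p"
    using p by simp
qed

lemma pmul_pone_right:
  assumes "f \<in> PA n"
  shows "pmul n f (pone n) = f"
proof
  fix p :: qpath
  obtain s l where p: "p = (s, l)" by fastforce
  have "pmul n f (pone n) (s, l) = (\<Sum>k\<le>length l. f (s, take k l) * pone n (pend n s (take k l), drop k l))"
    using PA_pone assms by (intro pmul_apply PA_finite_support)
  also have "\<dots> = (\<Sum>k\<le>length l. if k = length l then f (s, l) * (if pend n s l < n then 1 else 0) else 0)"
    by (intro sum.cong) (auto simp: pone_def)
  also have "\<dots> = f (s, l)"
    using assms by (auto simp: PA_def dest: pend_lt)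
  finally show "pmul n f (pone n) p = f p"
    using p by simp
qed

lemma vtx_idem:
  assumes "0 < n"
  shows "pmul n (vtx n i) (vtx n i) = vtx n i"
proof
  fix p :: qpath
  obtain s l where p: "p = (s, l)" by fastforce
  have "pmul n (vtx n i) (vtx n i) (s, l)
      = (\<Sum>k\<le>length l. vtx n i (s, take k l) * vtx n i (pend n s (take k l), drop k l))"
    by (intro pmul_apply PA_finite_support[OF PA_vtx[OF assms]])
  also have "\<dots> = (\<Sum>k\<le>length l. if k = 0 then vtx n i (s, l) else 0)"
    by (intro sum.cong) (auto simp: vtx_def)
  finally show "pmul n (vtx n i) (vtx n i) p = vtx n i p"
    using p by simp
qed

lemma linear_on_PA:
  assumes lin: "\<forall>c. \<forall>w\<in>PA n. \<forall>w'\<in>PA n. F (padd (psmult c w) w') = padd (psmult c (F w)) (F w')"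
  shows "F pzero = (pzero :: qpath \<Rightarrow> 'k::field)"
    and "w \<in> PA n \<Longrightarrow> F (psmult c w) = psmult c (F w)"
    and "w \<in> PA n \<Longrightarrow> w' \<in> PA n \<Longrightarrow> F (padd w w') = padd (F w) (F w')"
    and "w \<in> PA n \<Longrightarrow> w' \<in> PA n \<Longrightarrow> F (psub w w') = psub (F w) (F w')"
proof -
  have "padd (psmult 1 pzero) pzero = (pzero :: qpath \<Rightarrow> 'k)"
    by (simp add: padd_def psmult_def pzero_def)
  then have "F pzero = padd (psmult 1 (F pzero)) (F pzero)"
    using lin[rule_format, OF PA_pzero PA_pzero, of 1] by simp
  then have "\<forall>p. F pzero p = F pzero p + F pzero p"
    unfolding padd_def psmult_def mult_1 fun_eq_iff .
  then show zero: "F pzero = pzero"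
    unfolding pzero_def fun_eq_iff by (metis add_cancel_left_right)
  show "F (psmult c w) = psmult c (F w)" if "w \<in> PA n"
    using lin[rule_format, OF that PA_pzero, of c] zero
    by (simp add: padd_def psmult_def pzero_def)
  show "F (padd w w') = padd (F w) (F w')" if "w \<in> PA n" "w' \<in> PA n"
    using lin[rule_format, OF that, of 1] by (simp add: padd_def psmult_def)
  show "F (psub w w') = psub (F w) (F w')" if "w \<in> PA n" "w' \<in> PA n"
    using lin[rule_format, OF that(2,1), of "-1"] by (simp add: padd_def psmult_def psub_def)
qed

lemma X_arrel_eq_qtaft:
  "X (arrel n a) = (\<lambda>p. qtaft n lam G X gam a p + gam (atgt n a) * arrel n a p
     - gam (asrc n a) * inverse lam * G (arrel n a) p)"
  by (simp add: qtaft_def)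

section \<open>The preprojective relations\<close>

definition vpred :: "nat \<Rightarrow> nat \<Rightarrow> nat" where
  "vpred n i = (i + n - 1) mod n"

lemma vpred_lt: "0 < n \<Longrightarrow> vpred n i < n"
  by (simp add: vpred_def)

lemma mod_eq_vpred_iff:
  assumes "0 < n"
  shows "i mod n = vpred n q \<longleftrightarrow> (i + 1) mod n = q mod n"
proof
  assume "i mod n = vpred n q"
  then have "(i + 1) mod n = (q + n - 1 + 1) mod n"
    unfolding vpred_def by (metis mod_Suc_eq Suc_eq_plus1)
  then show "(i + 1) mod n = q mod n"
    using assms by simp
next
  assume "(i + 1) mod n = q mod n"
  then have "(i + 1 + (n - 1)) mod n = (q + (n - 1)) mod n"
    by (metis mod_add_left_eq)
  then show "i mod n = vpred n q"
    using assms by (simp add: vpred_def)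
qed

lemma Suc_vpred_mod: "0 < n \<Longrightarrow> (vpred n q + 1) mod n = q mod n"
  using mod_eq_vpred_iff[of n "vpred n q" q] by (simp add: vpred_def)

lemma rho_in_Omega:
  assumes "0 < n" "i < n"
  shows "rho n i \<in> Omega n"
proof -
  have "pmul n (pmul n (pone n) (rho n i)) (pone n)
      \<in> {pmul n (pmul n u (rho n i)) v | u v i. u \<in> PA n \<and> v \<in> PA n \<and> i < n}"
    using assms PA_pone by blast
  from lspan.step[OF this lspan.zero, of 1]
  have "pmul n (pmul n (pone n) (rho n i)) (pone n) \<in> Omega n"
    by (simp add: Omega_def)
  then show ?thesis
    using assms by (simp add: pmul_pone_left pmul_pone_right PA_rho)
qed

lemma Omega_linear_functional_vanishes:
  assumes "w \<in> Omega n"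
    and "\<And>f g c. L (\<lambda>x. c * f x + g x) = c * L f + L g" and "L (\<lambda>_. 0) = 0"
    and "\<And>u v i. u \<in> PA n \<Longrightarrow> v \<in> PA n \<Longrightarrow> i < n \<Longrightarrow> L (pmul n (pmul n u (rho n i)) v) = (0::'k::field)"
  shows "L w = 0"
  using assms(1) unfolding Omega_def
  by (induction rule: lspan.induct) (auto simp: assms(2-4))

lemma rho_apply_short:
  assumes "0 < n"
  shows "rho n i (s, []) = 0" and "rho n i (s, [x]) = 0" and "rho n i (s, [As a, As b]) = 0"
  using assms by (simp_all add: rho_def psub_apply pmul_apply_Nil pmul_apply_single pmul_apply_two
      PA_arrA PA_arrS arrA_apply arrS_apply)

lemma rho_loops_cancel:
  assumes n: "0 < n" and q: "q < n"
  shows "rho n i (q, [As (vpred n q), Ar (vpred n q)]) + rho n i (q, [Ar q, As q]) = (0::'k::field)"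
proof -
  have "rho n i (q, [As (vpred n q), Ar (vpred n q)]) = (if i mod n = vpred n q then 1 else 0 :: 'k)"
    using Suc_vpred_mod[OF n, of q] vpred_lt[OF n] q
    by (auto simp: rho_def psub_apply pmul_apply_two PA_arrA PA_arrS arrA_apply arrS_apply)
  moreover have "rho n i (q, [Ar q, As q]) = (if (i + 1) mod n = q then -1 else 0 :: 'k)"
    using n q by (auto simp: rho_def psub_apply pmul_apply_two PA_arrA PA_arrS arrA_apply arrS_apply)
  ultimately show ?thesis
    using mod_eq_vpred_iff[OF n, of i q] q by simp
qed

lemma pmul_rho_apply_short:
  assumes n: "0 < n" and u: "u \<in> PA n" and v: "v \<in> PA n"
  shows "pmul n (pmul n u (rho n i)) v (s, []) = 0"
    and "pmul n (pmul n u (rho n i)) v (s, [x]) = 0"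
    and "pmul n (pmul n u (rho n i)) v (s, [x, y]) = u (s, []) * rho n i (s, [x, y]) * v (atgt n y, [])"
  using assms by (simp_all add: pmul_apply_Nil pmul_apply_single pmul_apply_two PA_pmul PA_rho rho_apply_short)

lemma Omega_apply_single: "w \<in> Omega n \<Longrightarrow> 0 < n \<Longrightarrow> w (s, [x]) = 0"
  by (erule Omega_linear_functional_vanishes) (simp_all add: pmul_rho_apply_short)

lemma Omega_apply_As_As: "w \<in> Omega n \<Longrightarrow> 0 < n \<Longrightarrow> w (s, [As a, As b]) = 0"
  by (erule Omega_linear_functional_vanishes) (simp_all add: pmul_rho_apply_short rho_apply_short)

lemma Omega_loops_cancel:
  assumes "w \<in> Omega n" "0 < n" "q < n"
  shows "w (q, [As (vpred n q), Ar (vpred n q)]) + w (q, [Ar q, As q]) = 0"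
proof (rule Omega_linear_functional_vanishes[OF assms(1)])
  fix u v :: "qpath \<Rightarrow> 'a" and i
  assume "u \<in> PA n" "v \<in> PA n"
  moreover have "(vpred n q + 1) mod n = q"
    using Suc_vpred_mod[OF assms(2), of q] assms(3) by simp
  ultimately have "pmul n (pmul n u (rho n i)) v (q, [As (vpred n q), Ar (vpred n q)])
      + pmul n (pmul n u (rho n i)) v (q, [Ar q, As q])
      = u (q, []) * (rho n i (q, [As (vpred n q), Ar (vpred n q)]) + rho n i (q, [Ar q, As q])) * v (q, [])"
    using assms by (simp add: pmul_rho_apply_short algebra_simps)
  then show "pmul n (pmul n u (rho n i)) v (q, [As (vpred n q), Ar (vpred n q)])
      + pmul n (pmul n u (rho n i)) v (q, [Ar q, As q]) = 0"
    by (simp add: rho_loops_cancel assms(2,3))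
qed (auto simp: algebra_simps)

section \<open>Taft actions on the path algebra\<close>

lemma gref_Suc:
  assumes "d + i < 2 * n"
  shows "gref n d (i + 1) = vpred n (gref n d i)"
proof -
  define x where "x = 2 * n - (d + i)"
  have "0 < x" "0 < n"
    using assms by (auto simp: x_def)
  have "gref n d (i + 1) = (x - 1) mod n"
    by (simp add: gref_def x_def)
  also have "\<dots> = (x - 1 + n) mod n"
    by simp
  also have "\<dots> = (x + (n - 1)) mod n"
    using \<open>0 < x\<close> \<open>0 < n\<close> by simp
  also have "\<dots> = (x mod n + (n - 1)) mod n"
    by (simp only: mod_add_left_eq)
  also have "\<dots> = vpred n (gref n d i)"
    using \<open>0 < n\<close> by (simp add: gref_def x_def vpred_def)
  finally show ?thesis .
qed

lemma gref_cong:
  assumes "d + a \<le> 2 * n" "d + b \<le> 2 * n" "a mod n = b mod n"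
  shows "gref n d a = gref n d b"
proof -
  have "int (gref n d i) = (2 * int n - int d - int i) mod int n"
    if "d + i \<le> 2 * n" for i
    using that by (simp add: gref_def zmod_int of_nat_diff diff_diff_eq)
  moreover have "int a mod int n = int b mod int n"
    using assms(3) by (metis of_nat_mod)
  ultimately have "int (gref n d a) = int (gref n d b)"
    using assms(1,2) by (metis mod_diff_cong)
  then show ?thesis
    by simp
qed

locale taft_path_action =
  fixes n :: nat and lam :: "'k::field" and r m :: nat
    and G X :: "(qpath \<Rightarrow> 'k) \<Rightarrow> (qpath \<Rightarrow> 'k)"
  assumes n_pos: "0 < n"
    and module_algebra: "taft_module_algebra n lam r m G X"
    and descends: "descends n G X"
begin

lemma G_PA: "w \<in> PA n \<Longrightarrow> G w \<in> PA n"
  using module_algebra unfolding taft_module_algebra_def bij_betw_def by auto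

lemma X_PA: "w \<in> PA n \<Longrightarrow> X w \<in> PA n"
  using module_algebra unfolding taft_module_algebra_def by auto

lemmas PA_intros = PA_pmul PA_padd PA_psub PA_psmult G_PA X_PA
  PA_vtx[OF n_pos] PA_arrA[OF n_pos] PA_arrS[OF n_pos] PA_rho[OF n_pos]

lemma G_linear: "\<forall>c. \<forall>w\<in>PA n. \<forall>w'\<in>PA n. G (padd (psmult c w) w') = padd (psmult c (G w)) (G w')"
  using module_algebra unfolding taft_module_algebra_def by auto

lemma X_linear: "\<forall>c. \<forall>w\<in>PA n. \<forall>w'\<in>PA n. X (padd (psmult c w) w') = padd (psmult c (X w)) (X w')"
  using module_algebra unfolding taft_module_algebra_def by auto

lemmas G_psmult = linear_on_PA(2)[OF G_linear]
  and G_padd = linear_on_PA(3)[OF G_linear]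
  and G_psub = linear_on_PA(4)[OF G_linear]
  and X_psmult = linear_on_PA(2)[OF X_linear]
  and X_psub = linear_on_PA(4)[OF X_linear]

lemma G_pmul: "w \<in> PA n \<Longrightarrow> w' \<in> PA n \<Longrightarrow> G (pmul n w w') = pmul n (G w) (G w')"
  using module_algebra unfolding taft_module_algebra_def by auto

lemma X_pmul:
  "w \<in> PA n \<Longrightarrow> w' \<in> PA n \<Longrightarrow> X (pmul n w w') = padd (pmul n w (X w')) (pmul n (X w) (G w'))"
  using module_algebra unfolding taft_module_algebra_def by auto

lemma G_X_commute: "w \<in> PA n \<Longrightarrow> G (X w) p = lam * X (G w) p"
  using module_algebra unfolding taft_module_algebra_def by (simp add: psmult_def)

lemma G_Omega: "w \<in> Omega n \<Longrightarrow> G w \<in> Omega n"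
  using descends by (simp add: descends_def)

lemma X_Omega: "w \<in> Omega n \<Longrightarrow> X w \<in> Omega n"
  using descends by (simp add: descends_def)

lemma G_rho:
  "G (rho n i) = psub (pmul n (G (arrS n i)) (G (arrA n i))) (pmul n (G (arrA n (i + 1))) (G (arrS n (i + 1))))"
  unfolding rho_def by (simp add: G_psub G_pmul PA_intros)

lemma X_rho:
  "X (rho n i) = psub (padd (pmul n (arrS n i) (X (arrA n i))) (pmul n (X (arrS n i)) (G (arrA n i))))
    (padd (pmul n (arrA n (i + 1)) (X (arrS n (i + 1)))) (pmul n (X (arrA n (i + 1))) (G (arrS n (i + 1)))))"
  unfolding rho_def by (simp add: X_psub X_pmul PA_intros)

lemma PA_qtaft: "aidx a < n \<Longrightarrow> qtaft n lam G X gam a \<in> PA n"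
proof -
  assume "aidx a < n"
  then have "arrel n a \<in> PA n"
    by (rule PA_arrel[OF n_pos])
  then have "padd (psub (X (arrel n a)) (psmult (gam (atgt n a)) (arrel n a)))
      (psmult (gam (asrc n a) * inverse lam) (G (arrel n a))) \<in> PA n"
    by (intro PA_intros)
  then show ?thesis
    by (simp add: qtaft_def padd_def psub_def psmult_def)
qed

lemma X_fixed_vertex_apply_Nil:
  assumes "G (vtx n j) = vtx n j"
  shows "X (vtx n j) (j mod n, []) = 0"
proof -
  have Leibniz: "X (vtx n j) = padd (pmul n (vtx n j) (X (vtx n j))) (pmul n (X (vtx n j)) (vtx n j))"
    using X_pmul[of "vtx n j" "vtx n j"] assms by (simp add: vtx_idem n_pos PA_intros)
  have "X (vtx n j) (j mod n, []) = X (vtx n j) (j mod n, []) + X (vtx n j) (j mod n, [])"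
    by (subst (1) Leibniz) (simp add: padd_apply pmul_apply_Nil PA_intros vtx_apply)
  then show ?thesis
    by (metis add_cancel_left_right)
qed

end

locale reflection_action = taft_path_action +
  fixes d :: nat and mu mus gam :: "nat \<Rightarrow> 'k::field"
  assumes d_lt: "d < n" and lam_ne_1: "lam \<noteq> 1"
    and mu_nonzero: "\<forall>i<n. mu i \<noteq> 0 \<and> mus i \<noteq> 0"
    and G_vtx: "\<forall>i<n. G (vtx n i) = vtx n (gref n d i)"
    and G_arrA: "\<forall>i<n. G (arrA n i) = psmult (mu i) (arrS n (2 * n - (d + i + 1)))"
    and G_arrS: "\<forall>i<n. G (arrS n i) = psmult (mus i) (arrA n (2 * n - (d + i + 1)))"
    and X_vtx: "\<forall>i<n. X (vtx n i) = psub (psmult (gam i) (vtx n i))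
                                    (psmult (gam i * inverse lam) (vtx n (gref n d i)))"
begin

lemma G_arrA_gref: "G (arrA n i) = psmult (mu (i mod n)) (arrS n (gref n d (i mod n + 1)))"
  using G_arrA[rule_format, of "i mod n"] n_pos by (simp add: gref_def)

lemma G_arrS_gref: "G (arrS n i) = psmult (mus (i mod n)) (arrA n (gref n d (i mod n + 1)))"
  using G_arrS[rule_format, of "i mod n"] n_pos by (simp add: gref_def)

lemma mu_mus_Suc:
  assumes "i + 1 < n"
  shows "mu i * mus i = mu (i + 1) * mus (i + 1)"
proof -
  define q where "q = gref n d (i + 1)"
  have q: "q < n" "gref n d (i + 2) = vpred n q"
    using n_pos d_lt assms gref_Suc[of d "i + 1" n] by (simp_all add: q_def gref_def)
  have G_rho_i: "G (rho n i) = psub (pmul n (psmult (mus i) (arrA n q)) (psmult (mu i) (arrS n q)))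
      (pmul n (psmult (mu (i + 1)) (arrS n (vpred n q))) (psmult (mus (i + 1)) (arrA n (vpred n q))))"
    using assms q(2) by (simp add: G_rho G_arrA_gref G_arrS_gref q_def numeral_2_eq_2 del: arrA_mod arrS_mod)
  have "G (rho n i) \<in> Omega n"
    using assms by (intro G_Omega rho_in_Omega n_pos) simp
  from Omega_loops_cancel[OF this n_pos q(1)]
  have "mus i * mu i - mu (i + 1) * mus (i + 1) = 0"
    using q(1) Suc_vpred_mod[OF n_pos, of q] vpred_lt[OF n_pos]
    by (simp add: G_rho_i psub_apply psmult_apply pmul_apply_two PA_intros arrA_apply arrS_apply)
  then show ?thesis
    by (simp add: algebra_simps)
qed

lemma mu_mus_eq: "i < n \<Longrightarrow> mu i * mus i = mu 0 * mus 0"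
  by (induction i) (simp_all add: mu_mus_Suc)

context
  fixes j :: nat
  assumes j_lt: "j < n" and j_fixed: "gref n d j = j"
begin

lemma gam_fixed_vertex: "gam j = 0"
proof -
  have "X (vtx n j) (j, []) = 0"
    using X_fixed_vertex_apply_Nil G_vtx j_lt j_fixed by (metis mod_less)
  then have "gam j * (1 - inverse lam) = 0"
    using X_vtx j_lt j_fixed by (simp add: psub_apply psmult_apply vtx_apply algebra_simps)
  moreover have "inverse lam \<noteq> 1"
    using lam_ne_1 by (metis inverse_1 inverse_inverse_eq)
  ultimately show ?thesis
    by simp
qed

lemma gref_Suc_fixed: "gref n d (j + 1) = vpred n j"
  using gref_Suc[of d j n] d_lt j_lt j_fixed by simp

lemma gref_Suc_vpred_fixed: "gref n d (vpred n j + 1) = j"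
proof -
  have "gref n d (vpred n j + 1) = gref n d j"
    using d_lt j_lt vpred_lt[OF n_pos, of j] Suc_vpred_mod[OF n_pos, of j] by (intro gref_cong) auto
  then show ?thesis
    using j_fixed by simp
qed

lemma G_arrA_fixed: "G (arrA n j) = psmult (mu j) (arrS n (vpred n j))"
  using G_arrA_gref[of j] j_lt gref_Suc_fixed by simp

lemma G_arrS_fixed: "G (arrS n j) = psmult (mus j) (arrA n (vpred n j))"
  using G_arrS_gref[of j] j_lt gref_Suc_fixed by simp

lemma G_arrA_vpred_fixed: "G (arrA n (vpred n j)) = psmult (mu (vpred n j)) (arrS n j)"
  using G_arrA_gref[of "vpred n j"] vpred_lt[OF n_pos] gref_Suc_vpred_fixed by simp

lemma G_arrS_vpred_fixed: "G (arrS n (vpred n j)) = psmult (mus (vpred n j)) (arrA n j)"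
  using G_arrS_gref[of "vpred n j"] vpred_lt[OF n_pos] gref_Suc_vpred_fixed by simp

context
  fixes cj cjs :: 'k
  assumes sigma_Ar: "qtaft n lam G X gam (Ar j) = psmult cj (arrS n (j + n - 1))"
    and sigma_As: "qtaft n lam G X gam (As j) = psmult cjs (arrS n j)"
begin

lemma X_arrA_fixed:
  "X (arrA n j) = padd (psmult cj (arrS n (vpred n j))) (psmult (gam ((j + 1) mod n)) (arrA n j))"
proof -
  have arrA_j: "arrel n (Ar j) = arrA n j"
    using j_lt by (simp add: arrA_def)
  have "X (arrA n j) = (\<lambda>p. qtaft n lam G X gam (Ar j) p + gam ((j + 1) mod n) * arrel n (Ar j) p
      - gam j * inverse lam * G (arrel n (Ar j)) p)"
    using X_arrel_eq_qtaft[of X n "Ar j"] by (simp flip: arrA_j)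
  then show ?thesis
    by (simp add: arrA_j sigma_Ar gam_fixed_vertex vpred_def fun_eq_iff padd_apply psmult_apply)
qed

lemma X_arrS_fixed:
  "X (arrS n j) = padd (psmult cjs (arrS n j))
     (psmult (- gam ((j + 1) mod n) * inverse lam * mus j) (arrA n (vpred n j)))"
proof -
  have arrS_j: "arrel n (As j) = arrS n j"
    using j_lt by (simp add: arrS_def)
  have "X (arrS n j) = (\<lambda>p. qtaft n lam G X gam (As j) p + gam j * arrel n (As j) p
      - gam ((j + 1) mod n) * inverse lam * G (arrel n (As j)) p)"
    using X_arrel_eq_qtaft[of X n "As j"] by (simp flip: arrS_j)
  then show ?thesis
    by (simp add: arrS_j sigma_As gam_fixed_vertex G_arrS_fixed fun_eq_iff padd_apply psmult_apply)
qed

lemma sigma_coeff_fixed: "cj + cjs * mu j = 0"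
proof -
  have "X (rho n j) \<in> Omega n"
    using j_lt by (intro X_Omega rho_in_Omega n_pos)
  from Omega_apply_As_As[OF this n_pos, of "(j + 1) mod n" j "vpred n j"]
  show ?thesis
    using j_lt Suc_vpred_mod[OF n_pos, of j] vpred_lt[OF n_pos, of j]
    by (simp add: X_rho X_arrA_fixed X_arrS_fixed G_arrA_fixed G_arrS_gref psub_apply padd_apply
        psmult_apply pmul_apply_two PA_intros arrA_apply arrS_apply del: arrA_mod arrS_mod)
qed

lemma commute_coeff_arrA_fixed: "cj * mus (vpred n j) = lam * (mu j * X (arrS n (vpred n j)) (j, [Ar j]))"
  using G_X_commute[of "arrA n j" "(j, [Ar j])"] j_lt Suc_vpred_mod[OF n_pos, of j]
  by (simp add: X_arrA_fixed G_arrA_fixed G_arrS_vpred_fixed G_padd G_psmult X_psmult PA_intros)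
    (simp add: padd_apply psmult_apply arrA_apply arrS_apply)

lemma commute_coeff_arrS_fixed:
  "cjs * mus j = lam * (mus j * X (arrA n (vpred n j)) (vpred n j, [Ar (vpred n j)]))"
  using G_X_commute[of "arrS n j" "(vpred n j, [Ar (vpred n j)])"] j_lt vpred_lt[OF n_pos, of j]
    Suc_vpred_mod[OF n_pos, of j]
  by (simp add: X_arrS_fixed G_arrS_fixed G_arrA_vpred_fixed G_padd G_psmult X_psmult PA_intros)
    (simp add: padd_apply psmult_apply arrA_apply arrS_apply)

lemma loop_coeff_vpred_fixed:
  "X (arrA n (vpred n j)) (vpred n j, [Ar (vpred n j)]) - cj * mus j
    + X (arrS n (vpred n j)) (j, [Ar j]) * mu (vpred n j) - cjs = 0"
proof -
  have succ: "arrA n (Suc (vpred n j)) = arrA n j" "arrS n (Suc (vpred n j)) = arrS n j"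
    using Suc_vpred_mod[OF n_pos, of j] j_lt by (metis Suc_eq_plus1 arrA_mod mod_less,
        metis Suc_eq_plus1 arrS_mod mod_less)
  have "X (rho n (vpred n j)) \<in> Omega n"
    by (intro X_Omega rho_in_Omega n_pos vpred_lt)
  from Omega_loops_cancel[OF this n_pos j_lt]
  show ?thesis
    using j_lt Suc_vpred_mod[OF n_pos, of j] vpred_lt[OF n_pos, of j]
    by (simp add: X_rho succ X_arrA_fixed X_arrS_fixed G_arrA_vpred_fixed G_arrS_fixed psub_apply
        padd_apply psmult_apply pmul_apply_two PA_intros arrA_apply arrS_apply algebra_simps
        del: arrA_mod arrS_mod)
qed

lemma fixed_vertex_coefficients:
  "cjs = - inverse (mu j) * cj \<and> (cj \<noteq> 0 \<longrightarrow> (\<forall>i<n. mu i * mus i = 1))"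
proof (intro conjI impI)
  have "mu j \<noteq> 0" "mus j \<noteq> 0"
    using mu_nonzero j_lt by auto
  then show "cjs = - inverse (mu j) * cj"
    using sigma_coeff_fixed by (simp add: field_simps eq_neg_iff_add_eq_0)
  assume "cj \<noteq> 0"
  define jm where "jm = vpred n j"
  \<comment> \<open>the two coefficients of x.a_{j-1} and x.a*_{j-1} that the relations below eliminate\<close>
  define a where "a = X (arrA n jm) (jm, [Ar jm])"
  define b where "b = X (arrS n jm) (j, [Ar j])"
  have "cjs = lam * a"
    using commute_coeff_arrS_fixed \<open>mus j \<noteq> 0\<close> by (simp add: a_def jm_def)
  moreover have "mu jm * mus jm = mu j * mus j"
    using mu_mus_eq[OF vpred_lt[OF n_pos]] mu_mus_eq[OF j_lt] by (simp add: jm_def)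
  ultimately have "cj * (mu j * mus j - 1) * (1 - lam)
      = lam * mu j * (a - cj * mus j + b * mu jm - cjs)"
    using commute_coeff_arrA_fixed sigma_coeff_fixed
    unfolding b_def jm_def[symmetric] by algebra
  also have "\<dots> = 0"
    using loop_coeff_vpred_fixed by (simp add: a_def b_def jm_def)
  finally have "mu j * mus j = 1"
    using \<open>cj \<noteq> 0\<close> lam_ne_1 by simp
  then show "\<forall>i<n. mu i * mus i = 1"
    using mu_mus_eq mu_mus_eq[OF j_lt] by simp
qed

end

end

(* x.rho_i with x replaced by sigma on the arrows; hypothesis (II) asks that it lie in (Omega). *)
definition sigma_rho :: "nat \<Rightarrow> qpath \<Rightarrow> 'k" where
  "sigma_rho i =
    psub (padd (pmul n (arrS n i) (qtaft n lam G X gam (Ar i)))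
               (pmul n (qtaft n lam G X gam (As i)) (G (arrA n i))))
         (padd (pmul n (arrA n (i + 1)) (qtaft n lam G X gam (As ((i + 1) mod n))))
               (pmul n (qtaft n lam G X gam (Ar ((i + 1) mod n))) (G (arrS n (i + 1)))))"

context
  fixes k :: nat
  assumes k_lt: "k < n" and k_swap: "gref n d k = (k + 1) mod n"
begin

lemma gref_Suc_swap: "gref n d (k + 1) = k"
proof -
  have "gref n d (k + 1) = vpred n ((k + 1) mod n)"
    using gref_Suc[of d k n] d_lt k_lt k_swap by simp
  also have "\<dots> = k"
    using mod_eq_vpred_iff[OF n_pos, of k "(k + 1) mod n"] k_lt by simp
  finally show ?thesis .
qed

lemma G_arrA_swap: "G (arrA n k) = psmult (mu k) (arrS n k)"
  using G_arrA_gref[of k] k_lt gref_Suc_swap by simp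

lemma G_arrS_swap: "G (arrS n k) = psmult (mus k) (arrA n k)"
  using G_arrS_gref[of k] k_lt gref_Suc_swap by simp

lemma G_vtx_swap: "G (vtx n k) = vtx n (k + 1)"
  using G_vtx k_lt k_swap by (simp add: vtx_def)

context
  fixes ck cks :: 'k
  assumes sigma_Ar_swap: "qtaft n lam G X gam (Ar k) = psmult ck (vtx n k)"
    and sigma_As_swap: "qtaft n lam G X gam (As k) = psmult cks (vtx n (k + 1))"
begin

lemma X_arrA_swap:
  "X (arrA n k) = padd (psmult ck (vtx n k))
     (padd (psmult (gam ((k + 1) mod n)) (arrA n k)) (psmult (- gam k * inverse lam * mu k) (arrS n k)))"
proof -
  have arrA_k: "arrel n (Ar k) = arrA n k"
    using k_lt by (simp add: arrA_def)
  have "X (arrA n k) = (\<lambda>p. qtaft n lam G X gam (Ar k) p + gam ((k + 1) mod n) * arrel n (Ar k) p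
      - gam k * inverse lam * G (arrel n (Ar k)) p)"
    using X_arrel_eq_qtaft[of X n "Ar k"] by (simp flip: arrA_k)
  then show ?thesis
    by (simp add: arrA_k sigma_Ar_swap G_arrA_swap fun_eq_iff padd_apply psmult_apply)
qed

lemma X_arrS_swap_apply_Nil: "X (arrS n k) ((k + 1) mod n, []) = cks"
proof -
  have arrS_k: "arrel n (As k) = arrS n k"
    using k_lt by (simp add: arrS_def)
  have "X (arrS n k) = (\<lambda>p. qtaft n lam G X gam (As k) p + gam k * arrel n (As k) p
      - gam ((k + 1) mod n) * inverse lam * G (arrel n (As k)) p)"
    using X_arrel_eq_qtaft[of X n "As k"] by (simp flip: arrS_k)
  then show ?thesis
    by (simp add: arrS_k sigma_As_swap G_arrS_swap psmult_apply vtx_apply arrA_apply arrS_apply)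
qed

lemma commute_coeff_arrA_swap: "ck = lam * (mu k * cks)"
  using G_X_commute[of "arrA n k" "((k + 1) mod n, [])"] X_arrS_swap_apply_Nil
  by (simp add: X_arrA_swap G_arrA_swap G_arrS_swap G_vtx_swap G_padd G_psmult X_psmult PA_intros)
    (simp add: padd_apply psmult_apply vtx_apply arrA_apply arrS_apply)

lemma sigma_rho_coeff_swap:
  assumes "sigma_rho k \<in> Omega n"
  shows "ck + cks * mu k = 0"
  using Omega_apply_single[OF assms n_pos, of "(k + 1) mod n" "As k"] k_lt
  by (simp add: sigma_rho_def sigma_Ar_swap sigma_As_swap G_arrA_swap G_arrS_gref psub_apply
      padd_apply psmult_apply pmul_apply_single PA_intros PA_qtaft vtx_apply arrA_apply arrS_apply
      del: arrA_mod arrS_mod)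

lemma sigma_rho_vpred_coeff_swap:
  assumes "sigma_rho (vpred n k) \<in> Omega n"
  shows "cks + ck * mus k = 0"
proof -
  have succ: "Suc (vpred n k) mod n = k" "arrA n (Suc (vpred n k)) = arrA n k"
    "arrS n (Suc (vpred n k)) = arrS n k"
    using Suc_vpred_mod[OF n_pos, of k] k_lt
    by (simp, metis Suc_eq_plus1 arrA_mod mod_less, metis Suc_eq_plus1 arrS_mod mod_less)
  have "- cks = ck * mus k"
    using Omega_apply_single[OF assms n_pos, of k "Ar k"] k_lt vpred_lt[OF n_pos, of k]
    by (simp add: sigma_rho_def succ sigma_Ar_swap sigma_As_swap G_arrS_swap G_arrA_gref psub_apply
        padd_apply psmult_apply pmul_apply_single PA_intros PA_qtaft vtx_apply arrA_apply arrS_apply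
        del: arrA_mod arrS_mod)
  then show ?thesis
    by (simp add: add_eq_0_iff)
qed

lemma swapped_pair_coefficients:
  assumes "\<forall>i<n. sigma_rho i \<in> Omega n"
  shows "ck = - mu k * cks \<and> (ck \<noteq> 0 \<longrightarrow> lam = -1 \<and> (\<forall>i<n. mu i * mus i = 1))"
proof (intro conjI impI)
  show ck_eq: "ck = - mu k * cks"
    using sigma_rho_coeff_swap assms k_lt by (simp add: add_eq_0_iff mult.commute)
  assume "ck \<noteq> 0"
  then have "mu k * cks \<noteq> 0"
    using ck_eq by auto
  moreover have "(lam + 1) * (mu k * cks) = 0"
    using commute_coeff_arrA_swap ck_eq by algebra
  ultimately show "lam = -1"
    by (simp add: eq_neg_iff_add_eq_0)
  have "cks + ck * mus k = 0"
    using sigma_rho_vpred_coeff_swap assms vpred_lt[OF n_pos] by blast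
  then have "(mu k * mus k - 1) * ck = 0"
    using ck_eq by algebra
  then have "mu k * mus k = 1"
    using \<open>ck \<noteq> 0\<close> by simp
  then show "\<forall>i<n. mu i * mus i = 1"
    using mu_mus_eq mu_mus_eq[OF k_lt] by simp
qed

end

end

end

theorem lemma3p13:
  fixes lam :: "'k::field" and r m n d :: nat
    and G X :: "(qpath \<Rightarrow> 'k) \<Rightarrow> (qpath \<Rightarrow> 'k)"
    and mu mus gam :: "nat \<Rightarrow> 'k"
  assumes "1 < r" and "0 < m" and "r dvd m" and "primroot lam r" and "of_nat r \<noteq> (0::'k)"
    and "3 \<le> n" and "d < n"
    and "taft_module_algebra n lam r m G X"
    and "inner_faithful n lam r m G X"
    and "linear_action n G X"
    and "\<forall>i<n. mu i \<noteq> 0 \<and> mus i \<noteq> 0"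
    and "\<forall>i<n. G (vtx n i) = vtx n (gref n d i)"
    and "\<forall>i<n. G (arrA n i) = psmult (mu i) (arrS n (2 * n - (d + i + 1)))"
    and "\<forall>i<n. G (arrS n i) = psmult (mus i) (arrA n (2 * n - (d + i + 1)))"
    and "descends n G X"
    and "\<forall>i<n. X (vtx n i) = psub (psmult (gam i) (vtx n i))
                                    (psmult (gam i * inverse lam) (vtx n (gref n d i)))"
  shows
    "(\<forall>j cj cjs. j < n \<and> gref n d j = j
        \<and> qtaft n lam G X gam (Ar j) = psmult cj (arrS n (j + n - 1))
        \<and> qtaft n lam G X gam (As j) = psmult cjs (arrS n j)
        \<longrightarrow> cjs = - inverse (mu j) * cj \<and> (cj \<noteq> 0 \<longrightarrow> (\<forall>i<n. mu i * mus i = 1)))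
   \<and> (\<forall>k ck cks. k < n \<and> gref n d k = (k + 1) mod n \<and> gref n d ((k + 1) mod n) = k
        \<and> qtaft n lam G X gam (Ar k) = psmult ck (vtx n k)
        \<and> qtaft n lam G X gam (As k) = psmult cks (vtx n (k + 1))
        \<and> (\<forall>i<n. psub (padd (pmul n (arrS n i) (qtaft n lam G X gam (Ar i)))
                           (pmul n (qtaft n lam G X gam (As i)) (G (arrA n i))))
                     (padd (pmul n (arrA n (i + 1)) (qtaft n lam G X gam (As ((i + 1) mod n))))
                           (pmul n (qtaft n lam G X gam (Ar ((i + 1) mod n))) (G (arrS n (i + 1)))))
                 \<in> Omega n)
        \<longrightarrow> ck = - mu k * cks \<and> (ck \<noteq> 0 \<longrightarrow> lam = -1 \<and> (\<forall>i<n. mu i * mus i = 1)))"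
proof -
  have "lam \<noteq> 1"
    using \<open>1 < r\<close> \<open>primroot lam r\<close> by (auto simp: primroot_def)
  then interpret reflection_action n lam r m G X d mu mus gam
    using assms by unfold_locales auto
  show ?thesis
    by (rule conjI; intro allI impI; elim conjE)
      (assumption | rule fixed_vertex_coefficients swapped_pair_coefficients[unfolded sigma_rho_def])+
qed

end
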